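(* For $n\in\mathbb{N}$, $z(n)=f(n)+n$ if and only if $n=0$ or $n=\lfloor k\varphi^2\rfloor+1$ for some integer $k\ge1$, where $\varphi=(1+\sqrt5)/2$.
   Context: $\mathbb{N}=\{0,1,2,\dots\}$. The sequence $f:\mathbb{N}\to\mathbb{N}$ is defined greedily: $f(0)=0$, and for $n\ge1$, $f(n)$ is the least natural number such that (i) $f(n)\notin\{f(0),f(1),\dots,f(n-1)\}$ and (ii) $\sum_{1\le i\le n} f(i)$ is divisible by $n$. The sequence $z:\mathbb{N}\to\mathbb{N}$ is defined greedily: $z(0)=0$, and for $n\ge1$, $z(n)$ is the least natural number such that (i) $z(n)\notin\{z(0),\dots,z(n-1)\}$ and (ii) $\sum_{2\le i\le n} z(i)$ is divisible by $n+1$ (the empty sum being $0$). *)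

theory Defs
  imports Complex_Main
begin

fun fpre :: "nat \<Rightarrow> nat list" where
  "fpre 0 = [0]"
| "fpre (Suc n) = (let xs = fpre n in
     xs @ [LEAST m. m \<notin> set xs \<and> Suc n dvd (sum_list (drop 1 xs) + m)])"

definition f :: "nat \<Rightarrow> nat" where
  "f n = last (fpre n)"

(* zpre n = [z 0, z 1, ..., z n]; condition: sum_{2<=i<=n+1} z(i) divisible by n+2,
   where the sum over 2..1 is empty *)
fun zpre :: "nat \<Rightarrow> nat list" where
  "zpre 0 = [0]"
| "zpre (Suc n) = (let xs = zpre n in
     xs @ [LEAST m. m \<notin> set xs \<and>
             (Suc n + 1) dvd (sum_list (drop 2 (xs @ [m])))])"

definition z :: "nat \<Rightarrow> nat" where
  "z n = last (zpre n)"

definition phi :: real where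
  "phi = (1 + sqrt 5) / 2"

end

theory Submission
  imports Defs "HOL-Number_Theory.Fib"
begin

text \<open>
  Let \<open>q n = \<lfloor>n / \<phi>\<rfloor> = \<lfloor>n (\<phi> - 1)\<rfloor>\<close>. Both greedy sequences have closed forms in terms of \<open>q\<close>.
  If \<open>q\<close> jumps at \<open>n\<close>, i.e. \<open>q n = q (n - 1) + 1\<close>, then \<open>f n = q n + n\<close>, and otherwise
  \<open>f n = q n + 1\<close>. This map is an involution whose partial sums are \<open>n (q n + 1)\<close>; hence every value
  admissible at step \<open>n + 1\<close> is congruent to \<open>q n + 1\<close>, and the only such value below the closed form
  is already taken. The sequence \<open>z\<close> agrees with \<open>n \<mapsto> f (n + 1) - 1\<close> except at the Fibonacci numbers
  \<open>fib (2 j + 3)\<close> and their predecessors, where Cassini's identity gives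
  \<open>q (fib (2 j + 3)) = fib (2 j + 2)\<close>; the same greedy argument applies, with partial sums
  \<open>(n + 1) q (n + 1)\<close> corrected by one just before such a Fibonacci number. Comparing the closed
  forms, \<open>z n = f n + n\<close> holds exactly when \<open>q\<close> does not jump at \<open>n\<close> but jumps at \<open>n + 1\<close>,
  and these \<open>n\<close> are the numbers \<open>\<lfloor>k \<phi>\<^sup>2\<rfloor> + 1\<close>.
\<close>

section \<open>The greedy step\<close>

text \<open>Every admissible \<open>m\<close> is nonzero and congruent to \<open>r\<close> modulo \<open>d\<close>, so none lies below \<open>r\<close>,
  and \<open>r\<close> itself is either \<open>v\<close> or taken.\<close>

lemma Least_fresh_dvd_eq:
  fixes A :: "nat set" and d s r v :: nat
  assumes "v \<notin> A" "d dvd s + v" and "0 \<in> A" "d dvd s + r" "r \<le> d"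
    and "v = r \<or> (v = r + d \<and> r \<in> A)"
  shows "(LEAST m. m \<notin> A \<and> d dvd s + m) = v"
proof (rule Least_equality)
  fix y assume y: "y \<notin> A \<and> d dvd s + y"
  show "v \<le> y"
  proof (rule ccontr)
    assume "\<not> v \<le> y"
    have "int d dvd int (s + y) - int (s + r)"
      using y assms(4) by (simp only: of_nat_dvd_iff dvd_diff)
    then have dvd: "int d dvd int y - int r" by simp
    have "y \<noteq> 0" using y assms(3) by (cases y) auto
    have "v \<le> r + d" using assms(6) by auto
    have "y = r"
    proof (rule ccontr)
      assume "y \<noteq> r"
      then have "int d \<le> \<bar>int y - int r\<bar>" using dvd_imp_le_int[OF _ dvd] by simp
      then show False using \<open>\<not> v \<le> y\<close> \<open>y \<noteq> 0\<close> \<open>v \<le> r + d\<close> assms(5) by linarith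
    qed
    then show False using \<open>\<not> v \<le> y\<close> y assms(6) by auto
  qed
qed (use assms in simp)

section \<open>The golden ratio\<close>

lemma phi_gt_1: "1 < phi"
proof -
  have "1 < sqrt 5" by (simp add: real_less_rsqrt)
  then show ?thesis unfolding phi_def by simp
qed

lemma phi_less_5_thirds: "phi < 5/3"
proof -
  have "sqrt 5 < 7/3" by (rule real_less_lsqrt) (auto simp: power2_eq_square)
  then show ?thesis unfolding phi_def by simp
qed

lemma phi_gt_3_halves: "3/2 < phi"
proof -
  have "2 < sqrt 5" by (rule real_less_rsqrt) auto
  then show ?thesis unfolding phi_def by simp
qed

lemma phi_pos: "0 < phi"
  using phi_gt_1 by simp

lemma phi_square: "phi ^ 2 = phi + 1"
  unfolding phi_def power2_eq_square by (simp add: field_simps)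

lemma mult_phi_phi: "x * phi * phi = x * phi + x"
  by (simp add: mult.assoc phi_square distrib_left flip: power2_eq_square)

lemma mult_phi_phi_minus_1: "x * phi * (phi - 1) = x"
  using mult_phi_phi[of x] by (simp add: algebra_simps)

lemma golden_diophantine_imp_zero:
  fixes m k :: nat
  assumes "m * m = m * k + k * k"
  shows "k = 0"
  using assms
proof (induction k arbitrary: m rule: less_induct)
  case (less k)
  show ?case
  proof (rule ccontr)
    assume "k \<noteq> 0"
    have "k < m"
    proof (rule ccontr)
      assume "\<not> k < m"
      then have "m * m \<le> m * k" by simp
      then show False using less.prems \<open>k \<noteq> 0\<close> by simp
    qed
    have "m < 2 * k"
    proof (rule ccontr)
      assume "\<not> m < 2 * k"
      then have "m * (2 * k) \<le> m * m" by simp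
      moreover have "k * k < m * k" using \<open>k < m\<close> \<open>k \<noteq> 0\<close> by simp
      ultimately show False using less.prems by (simp add: algebra_simps)
    qed
    \<comment> \<open>\<open>(k, m - k)\<close> is a smaller solution\<close>
    have "int k * int k = int k * (int m - int k) + (int m - int k) * (int m - int k)"
      using arg_cong[OF less.prems, of int] by (simp add: algebra_simps)
    then have "int (k * k) = int (k * (m - k) + (m - k) * (m - k))"
      using \<open>k < m\<close> by simp
    then have "k * k = k * (m - k) + (m - k) * (m - k)"
      by (simp only: of_nat_eq_iff)
    then have "m - k = 0" using less.IH[of "m - k" k] \<open>m < 2 * k\<close> by linarith
    then show False using \<open>k < m\<close> by simp
  qed
qed

lemma nat_mult_phi_not_nat:
  assumes "k \<ge> 1"
  shows "real k * phi \<noteq> real m"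
proof
  assume h: "real k * phi = real m"
  have "real m * real m = real k * (real k * phi * phi)" using h by (simp add: algebra_simps)
  also have "\<dots> = real k * (real m + real k)" using h mult_phi_phi[of "real k"] by simp
  finally have "real (m * m) = real (m * k + k * k)" by (simp add: algebra_simps)
  then have "m * m = m * k + k * k" by (simp only: of_nat_eq_iff)
  then show False using golden_diophantine_imp_zero assms by auto
qed

lemma mult_phi_le_iff: "x * phi \<le> y \<longleftrightarrow> x \<le> y * (phi - 1)"
proof -
  have "x * phi \<le> y \<longleftrightarrow> x * phi * (phi - 1) \<le> y * (phi - 1)"
    using phi_gt_1 by simp
  then show ?thesis by (simp only: mult_phi_phi_minus_1)
qed

lemma mult_phi_less_iff: "x * phi < y \<longleftrightarrow> x < y * (phi - 1)"
proof -
  have "x * phi < y \<longleftrightarrow> x * phi * (phi - 1) < y * (phi - 1)"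
    using phi_gt_1 by simp
  then show ?thesis by (simp only: mult_phi_phi_minus_1)
qed

lemma add_mult_phi_minus_1_diff: "(x + y) * (phi - 1) - y = (phi - 1) * (x - y * (phi - 1))"
  using mult_phi_phi[of y] by (simp add: algebra_simps)

lemma le_mult_phi_minus_1_iff: "x \<le> y * (phi - 1) \<longleftrightarrow> (x + y) * (phi - 1) \<le> y"
proof -
  have "(x + y) * (phi - 1) \<le> y \<longleftrightarrow> (phi - 1) * (x - y * (phi - 1)) \<le> 0"
    using add_mult_phi_minus_1_diff[of x y] by linarith
  also have "\<dots> \<longleftrightarrow> x \<le> y * (phi - 1)"
    using phi_gt_1 by (simp add: mult_le_0_iff)
  finally show ?thesis ..
qed

lemma less_mult_phi_minus_1_iff: "x < y * (phi - 1) \<longleftrightarrow> (x + y) * (phi - 1) < y"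
proof -
  have "(x + y) * (phi - 1) < y \<longleftrightarrow> (phi - 1) * (x - y * (phi - 1)) < 0"
    using add_mult_phi_minus_1_diff[of x y] by linarith
  also have "\<dots> \<longleftrightarrow> x < y * (phi - 1)"
    using phi_gt_1 by (simp add: mult_less_0_iff)
  finally show ?thesis ..
qed

lemma mult_phi_square_less_iff: "x * phi ^ 2 < y \<longleftrightarrow> y * (phi - 1) < y - x"
  using mult_phi_less_iff[of x "y - x"] less_mult_phi_minus_1_iff[of x "y - x"]
  by (simp add: phi_square algebra_simps)

section \<open>The integer part of \<open>n / \<phi>\<close>\<close>

definition phi_quot :: "nat \<Rightarrow> nat" where
  "phi_quot n = nat \<lfloor>real n / phi\<rfloor>"

lemma phi_quot_eq_floor: "real (phi_quot n) = of_int \<lfloor>real n * (phi - 1)\<rfloor>"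
proof -
  have "real n / phi = real n * (phi - 1)"
    using mult_phi_phi_minus_1[of "real n"] phi_pos by (simp add: field_simps)
  then show ?thesis unfolding phi_quot_def using phi_gt_1 by simp
qed

lemma phi_quot_le: "real (phi_quot n) \<le> real n * (phi - 1)"
  unfolding phi_quot_eq_floor by (rule of_int_floor_le)

lemma phi_quot_gt: "real n * (phi - 1) < real (phi_quot n) + 1"
  unfolding phi_quot_eq_floor by (rule real_of_int_floor_add_one_gt)

lemma phi_quot_eqI:
  assumes "real k \<le> real n * (phi - 1)" and "real n * (phi - 1) < real k + 1"
  shows "phi_quot n = k"
proof -
  have "\<lfloor>real n * (phi - 1)\<rfloor> = int k" using assms by (simp add: floor_eq_iff)
  then show ?thesis using phi_quot_eq_floor[of n] by simp
qed

lemma phi_quot_eqI_mult_phi: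
  assumes "real k * phi \<le> real n" and "real n < (real k + 1) * phi"
  shows "phi_quot n = k"
  using assms by (intro phi_quot_eqI) (simp_all add: mult_phi_le_iff flip: not_le)

lemma phi_quot_less: "n \<ge> 1 \<Longrightarrow> real (phi_quot n) < real n * (phi - 1)"
  using phi_quot_le[of n] nat_mult_phi_not_nat[of n "phi_quot n + n"] mult_phi_phi_minus_1[of "real n"]
  by (fastforce simp: algebra_simps)

lemma phi_quot_Suc: "phi_quot (Suc n) = phi_quot n \<or> phi_quot (Suc n) = Suc (phi_quot n)"
proof -
  have "real (phi_quot n) < real (phi_quot (Suc n)) + 1" "real (phi_quot (Suc n)) < real (phi_quot n) + 2"
    using phi_quot_le[of n] phi_quot_gt[of n] phi_quot_le[of "Suc n"] phi_quot_gt[of "Suc n"]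
      phi_gt_1 phi_less_5_thirds by (auto simp: algebra_simps)
  then show ?thesis by linarith
qed

lemma phi_quot_mono: "m \<le> n \<Longrightarrow> phi_quot m \<le> phi_quot n"
proof (induction n rule: dec_induct)
  case (step n)
  then show ?case using phi_quot_Suc[of n] by auto
qed simp

lemma phi_quot_0: "phi_quot 0 = 0"
  and phi_quot_1: "phi_quot 1 = 0"
  and phi_quot_2: "phi_quot 2 = 1"
  by (rule phi_quot_eqI; use phi_gt_1 phi_less_5_thirds phi_gt_3_halves in simp)+

lemma phi_quot_less_self: "n \<ge> 1 \<Longrightarrow> phi_quot n < n"
proof -
  assume "n \<ge> 1"
  then have "real n * (phi - 1) < real n" using phi_less_5_thirds by simp
  then show ?thesis using phi_quot_le[of n] by linarith
qed

lemma phi_quot_ge_1: "n \<ge> 2 \<Longrightarrow> phi_quot n \<ge> 1"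
  using phi_quot_mono[of 2 n] phi_quot_2 by simp

definition jumps_at :: "nat \<Rightarrow> bool" where
  "jumps_at n \<longleftrightarrow> n \<ge> 1 \<and> phi_quot n = Suc (phi_quot (n - 1))"

lemma phi_quot_no_jump: "n \<ge> 1 \<Longrightarrow> \<not> jumps_at n \<Longrightarrow> phi_quot n = phi_quot (n - 1)"
  using phi_quot_Suc[of "n - 1"] unfolding jumps_at_def by auto

lemma jumps_at_unique:
  assumes "jumps_at a" "jumps_at b" "phi_quot a = phi_quot b"
  shows "a = b"
proof -
  have "\<not> a < b" if "jumps_at b" "phi_quot a = phi_quot b" for a b
  proof
    assume "a < b"
    then have "phi_quot a \<le> phi_quot (b - 1)" by (intro phi_quot_mono) simp
    then show False using that unfolding jumps_at_def by simp
  qed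
  then show ?thesis using assms by (metis linorder_neqE_nat)
qed

section \<open>The closed form of \<open>f\<close>\<close>

definition f_closed :: "nat \<Rightarrow> nat" where
  "f_closed n = (if n = 0 then 0 else if jumps_at n then phi_quot n + n else phi_quot n + 1)"

lemma f_closed_1: "f_closed 1 = 1"
  using phi_quot_0 phi_quot_1 by (simp add: f_closed_def jumps_at_def)

lemma f_closed_pos: "n \<ge> 1 \<Longrightarrow> f_closed n \<ge> 1"
  by (simp add: f_closed_def)

lemma f_closed_le: "f_closed n \<le> phi_quot n + n"
  by (simp add: f_closed_def)

lemma phi_quot_beyond_jump:
  assumes "jumps_at n"
  shows "phi_quot (phi_quot n + n) = n - 1" and "\<not> jumps_at (phi_quot n + n)"
proof -
  define K where "K = phi_quot n"
  have n: "n \<ge> 1" and K: "phi_quot (n - 1) = K - 1" "K \<ge> 1"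
    using assms unfolding jumps_at_def K_def by auto
  have "real (n - 1) * (phi - 1) < real (K - 1) + 1" by (metis K(1) phi_quot_gt)
  then have below: "\<not> real K < (real n - 1) * (phi - 1)" using n K by simp
  have above: "real K < real n * (phi - 1)" using phi_quot_less[OF n] K_def by simp
  have "(real K + real n) * (phi - 1) < real n"
    using above less_mult_phi_minus_1_iff by blast
  moreover have "real n - 1 \<le> (real K + (real n - 1)) * (phi - 1)"
    using below less_mult_phi_minus_1_iff[of "real K" "real n - 1"] by linarith
  ultimately have "phi_quot (K + n) = n - 1" "phi_quot (K + n - 1) = n - 1"
    using n phi_gt_1 by (auto intro!: phi_quot_eqI simp: algebra_simps)
  then show "phi_quot (phi_quot n + n) = n - 1" "\<not> jumps_at (phi_quot n + n)"
    unfolding K_def jumps_at_def by simp_all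
qed

lemma phi_quot_beyond_flat:
  assumes n: "n \<ge> 2" and flat: "\<not> jumps_at n"
  shows "phi_quot (phi_quot n + 1) = n - phi_quot n - 1" and "jumps_at (phi_quot n + 1)"
proof -
  define K where "K = phi_quot n"
  have K: "phi_quot (n - 1) = K" "K \<ge> 1"
    using phi_quot_no_jump[of n] flat n phi_quot_ge_1[OF n] K_def by auto
  have "real (phi_quot (n - 1)) < real (n - 1) * (phi - 1)" using n by (intro phi_quot_less) simp
  then have h1: "real K < (real n - 1) * (phi - 1)" using K n by simp
  have h2: "real n * (phi - 1) < real K + 1" using phi_quot_gt[of n] K_def by simp
  have "(real n - 1) * (phi - 1) < real n - 1" using n phi_less_5_thirds by simp
  then have "real (K + 1) < real n" using h1 by simp
  then have "K + 2 \<le> n" by linarith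
  have "real n - real K - 1 < (real K + 1) * (phi - 1)"
    using h2 less_mult_phi_minus_1_iff[of "real n - real K - 1" "real K + 1"] by simp
  moreover have "\<not> real n - real K \<le> (real K + 1) * (phi - 1)"
    using h1 phi_gt_3_halves le_mult_phi_minus_1_iff[of "real n - real K" "real K + 1"]
    by (simp add: algebra_simps)
  ultimately have at_Suc_K: "phi_quot (K + 1) = n - K - 1"
    using \<open>K + 2 \<le> n\<close> by (intro phi_quot_eqI) (simp_all add: algebra_simps)
  have "real n - real K - 2 \<le> real K * (phi - 1)"
    using h2 phi_gt_3_halves le_mult_phi_minus_1_iff[of "real n - real K - 2" "real K"]
    by (simp add: algebra_simps)
  moreover have "\<not> real n - real K - 1 \<le> real K * (phi - 1)"
    using h1 le_mult_phi_minus_1_iff[of "real n - real K - 1" "real K"] by (simp add: algebra_simps)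
  ultimately have "phi_quot K = n - K - 2"
    using \<open>K + 2 \<le> n\<close> by (intro phi_quot_eqI) (simp_all add: algebra_simps)
  with at_Suc_K show "phi_quot (phi_quot n + 1) = n - phi_quot n - 1" "jumps_at (phi_quot n + 1)"
    using \<open>K + 2 \<le> n\<close> unfolding K_def jumps_at_def by auto
qed

lemma f_closed_involution: "f_closed (f_closed n) = n"
proof -
  consider "n = 0" | "n = 1" | "jumps_at n" | "n \<ge> 2" "\<not> jumps_at n"
    by (metis One_nat_def less_2_cases_iff not_le)
  then show ?thesis
  proof cases
    case 3
    then show ?thesis using phi_quot_beyond_jump[OF 3] by (simp add: f_closed_def jumps_at_def)
  next
    case 4
    then show ?thesis using phi_quot_beyond_flat[OF 4] phi_quot_less_self[of n]
      by (simp add: f_closed_def)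
  qed (simp_all add: f_closed_1[unfolded One_nat_def], simp add: f_closed_def)
qed

lemma f_closed_inj: "f_closed a = f_closed b \<Longrightarrow> a = b"
  by (metis f_closed_involution)

lemma f_closed_phi_quot_less:
  assumes "jumps_at n"
  shows "f_closed (phi_quot n) < n"
proof -
  define K where "K = phi_quot n"
  have "n \<ge> 1" using assms unfolding jumps_at_def by simp
  then have "\<not> real n - real K \<le> real K * (phi - 1)"
    using phi_quot_less[of n] le_mult_phi_minus_1_iff[of "real n - real K" "real K"] K_def by simp
  then have "phi_quot K + K < n" using phi_quot_le[of K] by linarith
  then show ?thesis using f_closed_le[of K] K_def by simp
qed

lemma sum_f_closed: "(\<Sum>i=1..n. f_closed i) = n * (phi_quot n + 1)"
proof (induction n)
  case (Suc n)
  then show ?case using phi_quot_Suc[of n] by (auto simp: f_closed_def jumps_at_def)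
qed simp

lemma f_closed_greedy_step:
  "(LEAST m. m \<notin> f_closed ` {0..n} \<and> Suc n dvd n * (phi_quot n + 1) + m) = f_closed (Suc n)"
proof (rule Least_fresh_dvd_eq)
  show "f_closed (Suc n) \<notin> f_closed ` {0..n}" by (auto dest: f_closed_inj)
  have "n * (phi_quot n + 1) + f_closed (Suc n) = Suc n * (phi_quot (Suc n) + 1)"
    using sum_f_closed[of "Suc n"] sum_f_closed[of n] by simp
  then show "Suc n dvd n * (phi_quot n + 1) + f_closed (Suc n)"
    by (metis dvd_triv_left)
  show "0 \<in> f_closed ` {0..n}" by (force simp: f_closed_def)
  show "Suc n dvd n * (phi_quot n + 1) + (phi_quot n + 1)"
    by (metis add.commute dvd_triv_left mult_Suc)
  show "phi_quot n + 1 \<le> Suc n" using phi_quot_less_self[of n] by (cases n) (auto simp: phi_quot_0)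
  show "f_closed (Suc n) = phi_quot n + 1 \<or>
    f_closed (Suc n) = phi_quot n + 1 + Suc n \<and> phi_quot n + 1 \<in> f_closed ` {0..n}"
  proof (cases "jumps_at (Suc n)")
    case True
    then have "phi_quot (Suc n) = phi_quot n + 1" unfolding jumps_at_def by simp
    moreover have "f_closed (f_closed (phi_quot (Suc n))) = phi_quot (Suc n)"
      by (rule f_closed_involution)
    moreover have "f_closed (phi_quot (Suc n)) \<in> {0..n}"
      using f_closed_phi_quot_less[OF True] by auto
    ultimately have "phi_quot n + 1 \<in> f_closed ` {0..n}" by (metis image_eqI)
    then show ?thesis using True by (simp add: f_closed_def jumps_at_def)
  next
    case False
    then show ?thesis using phi_quot_Suc[of n] by (auto simp: f_closed_def jumps_at_def)
  qed
qed

lemma fpre_eq_map_f_closed: "fpre n = map f_closed [0..<Suc n]"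
proof (induction n)
  case 0
  then show ?case by (simp add: f_closed_def)
next
  case (Suc n)
  have set: "set (map f_closed [0..<Suc n]) = f_closed ` {0..n}"
    by (simp add: atLeastLessThanSuc_atLeastAtMost del: upt_Suc)
  have "drop 1 (map f_closed [0..<Suc n]) = map f_closed [1..<Suc n]"
    by (simp add: drop_map upt_conv_Cons del: upt_Suc)
  then have "sum_list (drop 1 (map f_closed [0..<Suc n])) = n * (phi_quot n + 1)"
    using sum_f_closed[of n]
    by (simp add: sum_set_upt_conv_sum_list_nat[symmetric] atLeastLessThanSuc_atLeastAtMost del: upt_Suc)
  then have "fpre (Suc n) = map f_closed [0..<Suc n] @ [f_closed (Suc n)]"
    using Suc set f_closed_greedy_step[of n] by (simp add: Let_def del: upt_Suc)
  then show ?case by simp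
qed

lemma f_eq_f_closed: "f n = f_closed n"
  unfolding f_def fpre_eq_map_f_closed by simp

section \<open>Fibonacci numbers\<close>

definition fib_odd :: "nat \<Rightarrow> nat" where
  "fib_odd j = fib (2 * j + 3)"

definition fib_even :: "nat \<Rightarrow> nat" where
  "fib_even j = fib (2 * j + 2)"

lemma fib_odd_0: "fib_odd 0 = 2" and fib_even_0: "fib_even 0 = 1"
  by (simp_all add: fib_odd_def fib_even_def numeral_eq_Suc)

lemma fib_even_Suc: "fib_even (Suc j) = fib_even j + fib_odd j"
  by (simp add: fib_odd_def fib_even_def numeral_eq_Suc)

lemma fib_odd_Suc: "fib_odd (Suc j) = fib_even j + 2 * fib_odd j"
  by (simp add: fib_odd_def fib_even_def numeral_eq_Suc)

lemma fib_even_ge_1: "fib_even j \<ge> 1"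
proof -
  have "0 < fib (2 * j + 2)" by (rule fib_neq_0_nat) simp
  then show ?thesis by (simp add: fib_even_def del: fib.simps)
qed

lemma fib_even_less_fib_odd: "fib_even j < fib_odd j"
  using fib_neq_0_nat[of "2 * j + 1"] by (simp add: fib_odd_def fib_even_def numeral_eq_Suc)

lemma fib_odd_ge_2: "fib_odd j \<ge> 2"
  using fib_even_ge_1[of j] fib_even_less_fib_odd[of j] by simp

lemma increasing_by_gap:
  fixes f :: "nat \<Rightarrow> nat"
  assumes step: "\<And>j. f j + c \<le> f (Suc j)" and "i < j"
  shows "f i + c \<le> f j"
  using \<open>i < j\<close>
proof (induction j)
  case (Suc j)
  then show ?case using step[of j] step[of i] by (cases "i = j") auto
qed simp

lemma fib_odd_gap: "i < j \<Longrightarrow> fib_odd i + 3 \<le> fib_odd j"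
proof (erule increasing_by_gap[rotated])
  show "fib_odd k + 3 \<le> fib_odd (Suc k)" for k
    using fib_even_ge_1[of k] fib_odd_ge_2[of k] by (simp add: fib_odd_Suc)
qed

lemma fib_even_gap: "i < j \<Longrightarrow> fib_even i + 2 \<le> fib_even j"
proof (erule increasing_by_gap[rotated])
  show "fib_even k + 2 \<le> fib_even (Suc k)" for k
    using fib_odd_ge_2[of k] by (simp add: fib_even_Suc)
qed

lemma fib_even_inj: "fib_even i = fib_even j \<Longrightarrow> i = j"
  using fib_even_gap[of i j] fib_even_gap[of j i] by (cases i j rule: linorder_cases) auto

lemma fib_odd_Suc_neq: "Suc (fib_odd i) \<noteq> fib_odd j"
  using fib_odd_gap[of i j] fib_odd_gap[of j i] by (cases i j rule: linorder_cases) auto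

lemma fib_even_Suc_neq: "Suc (fib_even i) \<noteq> fib_even j"
  using fib_even_gap[of i j] fib_even_gap[of j i] by (cases i j rule: linorder_cases) auto

lemma fib_odd_ge_5: "j \<ge> 1 \<Longrightarrow> fib_odd j \<ge> 5"
  using fib_odd_gap[of 0 j] fib_odd_0 by simp

lemma fib_even_ge_3: "j \<ge> 1 \<Longrightarrow> fib_even j \<ge> 3"
  using fib_even_gap[of 0 j] fib_even_0 by simp

lemma fib_odd_even_cassini: "fib_odd j * fib_odd j = fib_odd j * fib_even j + fib_even j * fib_even j + 1"
proof -
  have "(-1::int) ^ (2 * j + 2) = 1" by (simp add: power_mult)
  then have "int (fib (2 * j + 4) * fib (2 * j + 2)) - int ((fib (2 * j + 3))\<^sup>2) = -1"
    using fib_Cassini_int[of "2 * j + 2"] by (simp add: numeral_eq_Suc)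
  then have "int (fib_odd j * fib_odd j) = int (fib_odd j * fib_even j + fib_even j * fib_even j + 1)"
    unfolding fib_odd_def fib_even_def by (simp add: numeral_eq_Suc power2_eq_square algebra_simps)
  then show ?thesis by (simp only: of_nat_eq_iff)
qed

lemma fib_odd_minus_mult_phi_bounds:
  shows "0 < real (fib_odd j) - real (fib_even j) * phi"
    and "real (fib_odd j) - real (fib_even j) * phi < phi - 1"
    and "j \<ge> 1 \<Longrightarrow> real (fib_odd j) - real (fib_even j) * phi < 2 - phi"
proof -
  define c d where "c = real (fib_odd j)" and "d = real (fib_even j)"
  define x y where "x = c - d * phi" and "y = c + d * phi - d"
  \<comment> \<open>\<open>y = c - d (1 - \<phi>)\<close> is the conjugate of \<open>x\<close>, and \<open>x y = c\<^sup>2 - c d - d\<^sup>2 = 1\<close> by Cassini\<close>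
  have "c * c = c * d + d * d + 1"
    using arg_cong[OF fib_odd_even_cassini[of j], of real] unfolding c_def d_def by simp
  moreover have "x * y = c * c - c * d - d * d * phi * phi + d * d * phi"
    unfolding x_def y_def by (simp add: algebra_simps)
  ultimately have xy: "x * y = 1" using mult_phi_phi[of "d * d"] by linarith
  have "d \<le> d * phi" using fib_even_ge_1[of j] phi_gt_1 unfolding d_def by simp
  then have y: "c \<le> y" unfolding y_def by simp
  have c: "2 \<le> c" using fib_odd_ge_2[of j] unfolding c_def by simp
  have "0 < x * y" using xy by simp
  then have x: "0 < x" using y c by (simp add: zero_less_mult_iff)
  have "x * phi < x * y" using x y c phi_less_5_thirds by (intro mult_strict_left_mono) simp_all
  then have "x * phi < (phi - 1) * phi" using xy mult_phi_phi_minus_1[of 1] by (simp add: mult.commute)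
  then show "0 < c - d * phi" "c - d * phi < phi - 1" using x phi_pos unfolding x_def by simp_all
  assume "j \<ge> 1"
  then have "5 \<le> c" using fib_odd_ge_5 unfolding c_def by simp
  then have "x * (phi + 1) < x * y" using x y phi_less_5_thirds by (intro mult_strict_left_mono) simp_all
  moreover have "(2 - phi) * (phi + 1) = 1" using mult_phi_phi[of 1] by (simp add: algebra_simps)
  ultimately have "x * (phi + 1) < (2 - phi) * (phi + 1)" using xy by simp
  then show "c - d * phi < 2 - phi" using phi_pos unfolding x_def by simp
qed

lemma phi_quot_fib_odd: "phi_quot (fib_odd j) = fib_even j"
  and phi_quot_Suc_fib_odd: "phi_quot (Suc (fib_odd j)) = fib_even j"
  using fib_odd_minus_mult_phi_bounds(1,2)[of j]
  by (auto intro!: phi_quot_eqI_mult_phi simp: algebra_simps)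

lemma phi_quot_fib_odd_minus_1: "phi_quot (fib_odd j - 1) = fib_even j - 1"
  using fib_odd_minus_mult_phi_bounds(1,2)[of j] fib_odd_ge_2[of j] fib_even_ge_1[of j]
    phi_gt_1 phi_less_5_thirds
  by (intro phi_quot_eqI_mult_phi) (simp_all add: algebra_simps)

lemma phi_quot_fib_odd_minus_2: "phi_quot (fib_odd (Suc j) - 2) = fib_even (Suc j) - 2"
  using fib_odd_minus_mult_phi_bounds[of "Suc j"] fib_odd_ge_5[of "Suc j"] fib_even_ge_3[of "Suc j"]
    phi_gt_1
  by (intro phi_quot_eqI_mult_phi) (simp_all add: algebra_simps)

lemma jumps_at_fib_odd: "jumps_at (fib_odd j)"
  using phi_quot_fib_odd[of j] phi_quot_fib_odd_minus_1[of j] fib_odd_ge_2[of j] fib_even_ge_1[of j]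
  unfolding jumps_at_def by simp

lemma not_jumps_at_Suc_fib_odd: "\<not> jumps_at (Suc (fib_odd j))"
  using phi_quot_fib_odd[of j] phi_quot_Suc_fib_odd[of j] unfolding jumps_at_def by simp

lemma jumps_at_fib_odd_minus_1: "jumps_at (fib_odd (Suc j) - 1)"
  using phi_quot_fib_odd_minus_1[of "Suc j"] phi_quot_fib_odd_minus_2[of j]
    fib_odd_ge_5[of "Suc j"] fib_even_ge_3[of "Suc j"]
  unfolding jumps_at_def by (simp add: Suc_diff_Suc numeral_2_eq_2)

lemma f_closed_fib_odd: "f_closed (fib_odd j) = fib_even (Suc j)"
  using jumps_at_fib_odd[of j] phi_quot_fib_odd[of j] fib_odd_ge_2[of j]
  by (simp add: f_closed_def fib_even_Suc)

lemma f_closed_Suc_fib_odd: "f_closed (Suc (fib_odd j)) = Suc (fib_even j)"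
  using not_jumps_at_Suc_fib_odd[of j] phi_quot_Suc_fib_odd[of j] by (simp add: f_closed_def)

section \<open>The closed form of \<open>z\<close>\<close>

definition f_shifted :: "nat \<Rightarrow> nat" where
  "f_shifted n = f_closed (Suc n) - 1"

lemma f_shifted_involution: "f_shifted (f_shifted n) = n"
  using f_closed_pos[of "Suc n"] f_closed_involution[of "Suc n"] by (simp add: f_shifted_def)

lemma f_shifted_inj: "f_shifted a = f_shifted b \<Longrightarrow> a = b"
  by (metis f_shifted_involution)

definition z_special :: "nat \<Rightarrow> bool" where
  "z_special n \<longleftrightarrow> n \<le> 1 \<or> n \<in> range fib_odd \<or> Suc n \<in> range fib_odd"

definition z_closed :: "nat \<Rightarrow> nat" where
  "z_closed n =
     (if n \<le> 1 then n
      else if n \<in> range fib_odd then n + phi_quot n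
      else if Suc n \<in> range fib_odd then phi_quot n
      else f_shifted n)"

definition z_mean :: "nat \<Rightarrow> nat" where
  "z_mean n = phi_quot (Suc n) - (if Suc n \<in> range fib_odd then 1 else 0)"

lemma not_in_range_fib_odd_Suc: "n \<in> range fib_odd \<Longrightarrow> Suc n \<notin> range fib_odd"
  using fib_odd_Suc_neq by blast

lemma z_closed_generic: "\<not> z_special n \<Longrightarrow> z_closed n = f_shifted n"
  by (simp add: z_special_def z_closed_def)

lemma z_closed_fib_odd: "z_closed (fib_odd j) = fib_even (Suc j)"
  using fib_odd_ge_2[of j] phi_quot_fib_odd[of j] by (simp add: z_closed_def fib_even_Suc)

lemma z_closed_fib_odd_minus_1: "z_closed (fib_odd (Suc j) - 1) = fib_even (Suc j) - 1"
proof -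
  have "Suc (fib_odd (Suc j) - 1) = fib_odd (Suc j)" using fib_odd_ge_2[of "Suc j"] by simp
  then have "fib_odd (Suc j) - 1 \<notin> range fib_odd" "Suc (fib_odd (Suc j) - 1) \<in> range fib_odd"
    using not_in_range_fib_odd_Suc by auto
  then show ?thesis
    using fib_odd_ge_5[of "Suc j"] phi_quot_fib_odd_minus_1[of "Suc j"] by (simp add: z_closed_def)
qed

lemma z_special_cases:
  assumes "z_special n"
  obtains "n \<le> 1" | j where "n = fib_odd j" | j where "n = fib_odd (Suc j) - 1"
proof -
  consider "n \<le> 1" | "n \<in> range fib_odd" | j where "Suc n = fib_odd j"
    using assms unfolding z_special_def by (metis rangeE)
  then show ?thesis
  proof cases
    case (3 j)
    then show ?thesis
    proof (cases j)
      case (Suc i)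
      then show ?thesis using 3 that(3)[of i] by simp
    qed (use 3 that(1) fib_odd_0 in simp)
  qed (use that in auto)
qed

lemma z_closed_special_values:
  assumes "z_special n"
  shows "(n \<le> 1 \<and> z_closed n = n) \<or> (\<exists>j. n = fib_odd j \<and> z_closed n = fib_even (Suc j))
    \<or> (\<exists>j. n = fib_odd (Suc j) - 1 \<and> z_closed n = fib_even (Suc j) - 1)"
  using assms
proof (cases rule: z_special_cases)
  case 1
  then show ?thesis by (simp add: z_closed_def)
qed (use z_closed_fib_odd z_closed_fib_odd_minus_1 in blast)+

lemma z_closed_inj_on_special:
  assumes "z_special a" "z_special b" "z_closed a = z_closed b"
  shows "a = b"
proof -
  have big: "3 \<le> fib_even (Suc j)" for j
    using fib_even_ge_3[of "Suc j"] by simp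
  have neq: "fib_even (Suc i) \<noteq> fib_even (Suc j) - 1" for i j
    using fib_even_Suc_neq[of "Suc i" "Suc j"] big[of j] by linarith
  have inj: "i = j" if "fib_even (Suc i) - 1 = fib_even (Suc j) - 1" for i j
    using that big[of i] big[of j] fib_even_inj[of "Suc i" "Suc j"] by simp
  have small: "n \<le> 1" if "z_special n" "z_closed n \<le> 1" for n
  proof -
    have "\<not> fib_even (Suc j) \<le> 1" "\<not> fib_even (Suc j) - 1 \<le> 1" for j
      using big[of j] by simp_all
    then show ?thesis using z_closed_special_values[OF that(1)] that(2) by auto
  qed
  have id: "z_closed n = n" if "n \<le> 1" for n
    using that by (simp add: z_closed_def)
  consider "a \<le> 1" "b \<le> 1" | "\<not> a \<le> 1" "\<not> b \<le> 1"
    using small id assms by metis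
  then show ?thesis
  proof cases
    case 1
    then show ?thesis using assms(3) id by metis
  next
    case 2
    from z_closed_special_values[OF assms(1)] z_closed_special_values[OF assms(2)] 2
    show ?thesis
    proof (elim disjE exE conjE)
      fix i j assume "a = fib_odd i" "z_closed a = fib_even (Suc i)"
        "b = fib_odd j" "z_closed b = fib_even (Suc j)"
      then show ?thesis using assms(3) fib_even_inj by (metis nat.inject)
    next
      fix i j assume "a = fib_odd (Suc i) - 1" "z_closed a = fib_even (Suc i) - 1"
        "b = fib_odd (Suc j) - 1" "z_closed b = fib_even (Suc j) - 1"
      then show ?thesis using assms(3) inj by metis
    qed (use assms(3) neq in metis)+
  qed
qed

lemma f_shifted_fib_odd: "f_shifted (fib_odd j) = fib_even j"
  using f_closed_Suc_fib_odd[of j] by (simp add: f_shifted_def)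

lemma f_shifted_fib_odd_minus_1: "f_shifted (fib_odd j - 1) = fib_even (Suc j) - 1"
  using f_closed_fib_odd[of j] fib_odd_ge_2[of j] by (simp add: f_shifted_def)

lemma z_closed_special_eq_f_shifted:
  assumes "z_special n"
  obtains m where "z_special m" "z_closed n = f_shifted m"
  using assms
proof (cases rule: z_special_cases)
  case 1
  then consider "n = 0" | "n = 1" by linarith
  then show ?thesis
  proof cases
    case 1
    have "f_shifted 0 = 0" using f_closed_1 by (simp add: f_shifted_def)
    then show ?thesis using that[of 0] 1 by (simp add: z_special_def z_closed_def)
  next
    case 2
    then show ?thesis using that[of "fib_odd 0"] f_shifted_fib_odd[of 0]
      by (simp add: z_special_def z_closed_def fib_even_0)
  qed
next
  case (2 j)
  then show ?thesis using that[of "fib_odd (Suc j)"] f_shifted_fib_odd z_closed_fib_odd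
    by (simp add: z_special_def)
next
  case (3 j)
  have "Suc (fib_odd j - 1) = fib_odd j" using fib_odd_ge_2[of j] by simp
  then have "z_special (fib_odd j - 1)" unfolding z_special_def by (metis rangeI)
  then show ?thesis using that[of "fib_odd j - 1"] 3 f_shifted_fib_odd_minus_1 z_closed_fib_odd_minus_1
    by simp
qed

lemma z_closed_inj: "z_closed a = z_closed b \<Longrightarrow> a = b"
proof -
  have special_generic: "a = b"
    if a: "z_special a" and b: "\<not> z_special b" and eq: "z_closed a = z_closed b" for a b
  proof -
    obtain m where "z_special m" "z_closed a = f_shifted m"
      using z_closed_special_eq_f_shifted[OF a] .
    then have "f_shifted b = f_shifted m" using b eq z_closed_generic by simp
    then show ?thesis using f_shifted_inj \<open>z_special m\<close> b by blast
  qed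
  assume "z_closed a = z_closed b"
  then show "a = b"
    using z_closed_inj_on_special special_generic[of a b] special_generic[of b a]
      z_closed_generic f_shifted_inj
    by metis
qed

lemma z_mean_step:
  assumes "N \<ge> 2"
  shows "z_mean N = z_mean (N - 1) \<and> z_closed N = z_mean (N - 1)
    \<or> z_mean N = Suc (z_mean (N - 1)) \<and> z_closed N = z_mean (N - 1) + N + 1"
proof -
  have SN: "Suc (N - 1) = N" using assms by simp
  consider j where "Suc N = fib_odd j" | j where "N = fib_odd j"
    | "N \<notin> range fib_odd" "Suc N \<notin> range fib_odd" by blast
  then show ?thesis
  proof cases
    case (1 j)
    then have "Suc N \<in> range fib_odd" "N \<notin> range fib_odd"
      using not_in_range_fib_odd_Suc by auto
    moreover have "phi_quot (Suc N) = fib_even j" "phi_quot N = fib_even j - 1"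
      using 1 phi_quot_fib_odd[of j] phi_quot_fib_odd_minus_1[of j] by (simp_all flip: 1)
    ultimately show ?thesis using assms by (simp add: z_mean_def z_closed_def SN)
  next
    case (2 j)
    then have "Suc N \<notin> range fib_odd" using not_in_range_fib_odd_Suc by auto
    then show ?thesis
      using 2 assms phi_quot_fib_odd[of j] phi_quot_Suc_fib_odd[of j] fib_even_ge_1[of j]
      by (auto simp: z_mean_def z_closed_def SN)
  next
    case 3
    then have "z_closed N = f_shifted N" "z_mean N = phi_quot (Suc N)" "z_mean (N - 1) = phi_quot N"
      using assms by (simp_all add: z_closed_def z_mean_def SN)
    then show ?thesis
      using phi_quot_Suc[of N] by (auto simp: f_shifted_def f_closed_def jumps_at_def)
  qed
qed

lemma sum_z_closed: "n \<ge> 1 \<Longrightarrow> (\<Sum>i=2..n. z_closed i) = (n + 1) * z_mean n"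
proof (induction n rule: nat_induct_at_least)
  case base
  have "2 \<in> range fib_odd" using fib_odd_0 by (metis rangeI)
  then show ?case using phi_quot_2 by (simp add: z_mean_def numeral_2_eq_2)
next
  case (Suc n)
  then show ?case using z_mean_step[of "Suc n"] by auto
qed

lemma z_closed_attains_fib_even:
  assumes "fib_even j < N" "2 \<le> N"
  shows "\<exists>i<N. z_closed i = fib_even j"
proof (cases j)
  case 0
  then show ?thesis using assms fib_even_0 by (intro exI[of _ 1]) (simp add: z_closed_def)
next
  case (Suc j')
  have "fib_odd j' < fib_even j" using Suc fib_even_Suc[of j'] fib_even_ge_1[of j'] by simp
  then show ?thesis using assms Suc z_closed_fib_odd[of j'] by (intro exI[of _ "fib_odd j'"]) simp
qed

lemma z_closed_attains_phi_quot:
  assumes N: "N \<ge> 3" "N \<notin> range fib_odd" "Suc N \<notin> range fib_odd" and jump: "jumps_at (Suc N)"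
  shows "\<exists>i<N. z_closed i = phi_quot N"
proof -
  define K where "K = phi_quot (Suc N)"
  have K: "K = Suc (phi_quot N)" using jump unfolding K_def jumps_at_def by simp
  have "phi_quot N \<ge> 1" using phi_quot_ge_1 N(1) by simp
  define i where "i = f_closed K - 1"
  have i: "Suc i = f_closed K" "i < N"
    using f_closed_pos[of K] f_closed_phi_quot_less[OF jump] K unfolding i_def K_def by simp_all
  have FK: "f_closed (Suc i) = K" using f_closed_involution i(1) by simp
  have "Suc 1 \<in> range fib_odd" using fib_odd_0 by (metis Suc_1 rangeI)
  then consider "i = 0" | j where "i = fib_odd j" | j where "Suc i = fib_odd j" | "\<not> z_special i"
    unfolding z_special_def by (auto simp: le_Suc_eq)
  then show ?thesis
  proof cases
    case 1
    then show ?thesis using FK f_closed_1 K \<open>phi_quot N \<ge> 1\<close> by simp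
  next
    case (2 j)
    then have "phi_quot N = fib_even j" using FK K f_closed_Suc_fib_odd[of j] by simp
    then show ?thesis using z_closed_attains_fib_even[of j N] phi_quot_less_self[of N] N(1) by simp
  next
    case (3 j)
    then have "phi_quot (Suc N) = phi_quot (fib_odd (Suc j))"
      using FK K_def f_closed_fib_odd[of j] phi_quot_fib_odd[of "Suc j"] by simp
    then have "Suc N = fib_odd (Suc j)" using jumps_at_unique jump jumps_at_fib_odd by blast
    then show ?thesis using N(3) by auto
  next
    case 4
    then have "z_closed i = phi_quot N"
      using z_closed_generic FK K by (simp add: f_shifted_def)
    then show ?thesis using i(2) by blast
  qed
qed

lemma z_closed_attains_z_mean:
  assumes N: "N \<ge> 3" and step: "z_mean N = Suc (z_mean (N - 1))"
  shows "\<exists>i<N. z_closed i = z_mean (N - 1)"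
proof -
  have SN: "Suc (N - 1) = N" using N by simp
  have "N = fib_odd j \<Longrightarrow> j \<noteq> 0" for j using N fib_odd_0 by (cases j) auto
  then consider j where "Suc N = fib_odd j" | j where "N = fib_odd (Suc j)"
    | "N \<notin> range fib_odd" "Suc N \<notin> range fib_odd"
    by (metis not0_implies_Suc rangeE)
  then show ?thesis
  proof cases
    case (1 j)
    then have "Suc N \<in> range fib_odd" "N \<notin> range fib_odd"
      using not_in_range_fib_odd_Suc by auto
    moreover have "phi_quot (Suc N) = fib_even j" "phi_quot N = fib_even j - 1"
      using 1 phi_quot_fib_odd[of j] phi_quot_fib_odd_minus_1[of j] by (simp_all flip: 1)
    ultimately have "z_mean N = z_mean (N - 1)" unfolding z_mean_def SN by simp
    then show ?thesis using step by simp
  next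
    case (2 j)
    then have "z_mean (N - 1) = fib_even (Suc j) - 1"
      unfolding z_mean_def SN using phi_quot_fib_odd[of "Suc j"] by simp
    moreover have "fib_odd (Suc j) - 1 < N" using 2 fib_odd_ge_2[of "Suc j"] by simp
    ultimately show ?thesis using z_closed_fib_odd_minus_1[of j] by auto
  next
    case 3
    then have "z_mean N = phi_quot (Suc N)" "z_mean (N - 1) = phi_quot N"
      unfolding z_mean_def SN by simp_all
    then have "jumps_at (Suc N)" using step by (simp add: jumps_at_def)
    then show ?thesis using z_closed_attains_phi_quot[OF N 3] \<open>z_mean (N - 1) = phi_quot N\<close> by simp
  qed
qed

lemma z_closed_greedy_step:
  assumes n: "n \<ge> 1"
  shows "(LEAST m. m \<notin> z_closed ` {0..n} \<and> Suc (Suc n) dvd (Suc n) * z_mean n + m)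
    = z_closed (Suc n)"
proof (rule Least_fresh_dvd_eq)
  show "z_closed (Suc n) \<notin> z_closed ` {0..n}" by (auto dest: z_closed_inj)
  have "Suc n * z_mean n + z_closed (Suc n) = Suc (Suc n) * z_mean (Suc n)"
    using sum_z_closed[of n] sum_z_closed[of "Suc n"] n by simp
  then show "Suc (Suc n) dvd Suc n * z_mean n + z_closed (Suc n)" by (metis dvd_triv_left)
  have "z_closed 0 = 0" by (simp add: z_closed_def)
  then show zero: "0 \<in> z_closed ` {0..n}" by force
  show "Suc (Suc n) dvd Suc n * z_mean n + z_mean n"
    by (metis add.commute dvd_triv_left mult_Suc)
  show "z_mean n \<le> Suc (Suc n)"
    using phi_quot_less_self[of "Suc n"] by (simp add: z_mean_def)
  have "z_mean n \<in> z_closed ` {0..n}" if "z_mean (Suc n) = Suc (z_mean n)"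
  proof (cases "n = 1")
    case True
    have "2 \<in> range fib_odd" using fib_odd_0 by (metis rangeI)
    then show ?thesis using zero True phi_quot_2 by (simp add: z_mean_def numeral_2_eq_2)
  next
    case False
    then show ?thesis using z_closed_attains_z_mean[of "Suc n"] n that by (force simp: less_Suc_eq_le)
  qed
  then show "z_closed (Suc n) = z_mean n \<or>
    z_closed (Suc n) = z_mean n + Suc (Suc n) \<and> z_mean n \<in> z_closed ` {0..n}"
    using z_mean_step[of "Suc n"] n by auto
qed

lemma zpre_eq_map_z_closed: "zpre n = map z_closed [0..<Suc n]"
proof (induction n)
  case 0
  then show ?case by (simp add: z_closed_def)
next
  case (Suc n)
  have set: "set (map z_closed [0..<Suc n]) = z_closed ` {0..n}"
    by (simp add: atLeastLessThanSuc_atLeastAtMost del: upt_Suc)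
  have zpre: "zpre (Suc n) = map z_closed [0..<Suc n] @ [LEAST m. m \<notin> z_closed ` {0..n} \<and>
      Suc (Suc n) dvd sum_list (drop 2 (map z_closed [0..<Suc n] @ [m]))]"
    using Suc set by (simp add: Let_def del: upt_Suc)
  have "(LEAST m. m \<notin> z_closed ` {0..n} \<and>
      Suc (Suc n) dvd sum_list (drop 2 (map z_closed [0..<Suc n] @ [m]))) = z_closed (Suc n)"
  proof (cases "n = 0")
    case True
    then show ?thesis by (auto simp: z_closed_def intro!: Least_equality)
  next
    case False
    have "drop 2 (map z_closed [0..<Suc n] @ [m]) = map z_closed [2..<Suc n] @ [m]" for m
      using False by (simp add: drop_map numeral_2_eq_2 del: upt_Suc)
    then have "sum_list (drop 2 (map z_closed [0..<Suc n] @ [m])) = Suc n * z_mean n + m" for m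
      using sum_z_closed[of n] False
      by (simp add: sum_set_upt_conv_sum_list_nat[symmetric] atLeastLessThanSuc_atLeastAtMost del: upt_Suc)
    then show ?thesis using z_closed_greedy_step[of n] False by simp
  qed
  then show ?case using zpre by simp
qed

lemma z_eq_z_closed: "z n = z_closed n"
  unfolding z_def zpre_eq_map_z_closed by simp

section \<open>The complementary Beatty sequence\<close>

lemma flat_before_jump_imp_beatty:
  assumes n: "n \<ge> 2" and flat: "\<not> jumps_at n" and jump: "jumps_at (Suc n)"
  shows "\<exists>k::int. k \<ge> 1 \<and> int n = \<lfloor>of_int k * phi ^ 2\<rfloor> + 1"
proof -
  define j where "j = phi_quot (Suc n)"
  have j: "phi_quot n = j - 1" "phi_quot (n - 1) = j - 1" "j \<ge> 1"
    using jump flat phi_quot_no_jump[of n] n unfolding j_def jumps_at_def by auto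
  have "real j \<le> (real n + 1) * (phi - 1)" using phi_quot_le[of "Suc n"] j_def by (simp add: add.commute)
  also have "\<dots> < (real n + 1) * (2/3)" using phi_less_5_thirds by (intro mult_strict_left_mono) simp_all
  also have "\<dots> \<le> real n" using n by simp
  finally have "j < n" by simp
  define k where "k = n - j"
  have rk: "real k = real n - real j" using \<open>j < n\<close> k_def by simp
  have "real k * phi ^ 2 < real n"
    using phi_quot_gt[of n] j rk mult_phi_square_less_iff[of "real k" "real n"] by simp
  moreover have "\<not> real k * phi ^ 2 < real n - 1"
    using phi_quot_le[of "n - 1"] j n rk mult_phi_square_less_iff[of "real k" "real n - 1"] by simp
  ultimately have "\<lfloor>real k * phi ^ 2\<rfloor> = int n - 1" by (simp add: floor_eq_iff)
  moreover have "k \<ge> 1" using \<open>j < n\<close> k_def by simp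
  ultimately show ?thesis by (intro exI[of _ "int k"]) simp
qed

lemma beatty_imp_flat_before_jump:
  assumes "k \<ge> 1" and n: "int n = \<lfloor>of_int k * phi ^ 2\<rfloor> + 1"
  shows "n \<ge> 2 \<and> \<not> jumps_at n \<and> jumps_at (Suc n)"
proof -
  define K where "K = nat k"
  have K: "of_int k = real K" "K \<ge> 1" using assms(1) K_def by simp_all
  have "\<lfloor>real K * phi ^ 2\<rfloor> = int n - 1" using n K(1) by simp
  then have bounds: "real n - 1 \<le> real K * phi ^ 2" "real K * phi ^ 2 < real n"
    unfolding floor_eq_iff by simp_all
  have "real K \<le> real K * phi" using K(2) phi_gt_1 by simp
  moreover have "real K * phi ^ 2 = real K * phi + real K" by (simp add: phi_square algebra_simps)
  ultimately have "real (K + 1) < real n" using bounds K(2) by linarith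
  then have "K + 2 \<le> n" by linarith
  define j where "j = n - K"
  have rj: "real j = real n - real K" "j \<ge> 1" using \<open>K + 2 \<le> n\<close> j_def by simp_all
  have "real n * (phi - 1) < real j"
    using bounds mult_phi_square_less_iff[of "real K" "real n"] rj by simp
  moreover have "\<not> (real n - 1) * (phi - 1) < real j - 1"
    using bounds mult_phi_square_less_iff[of "real K" "real n - 1"] rj by simp
  moreover have "(real n + 1) * (phi - 1) < real j + 1"
    using bounds mult_phi_square_less_iff[of "real K" "real n + 1"] rj by simp
  moreover have "\<not> (real n + 1) * (phi - 1) < real j"
  proof -
    have "real n + 1 \<le> real K * phi ^ 2 + phi ^ 2" using bounds phi_square phi_gt_1 by simp
    then show ?thesis
      using mult_phi_square_less_iff[of "real K + 1" "real n + 1"] rj by (simp add: algebra_simps)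
  qed
  ultimately have "phi_quot (Suc n) = j" "phi_quot n = j - 1" "phi_quot (n - 1) = j - 1"
    using rj \<open>K + 2 \<le> n\<close> phi_gt_1 by (auto intro!: phi_quot_eqI simp: algebra_simps)
  then show ?thesis using \<open>K + 2 \<le> n\<close> rj unfolding jumps_at_def by auto
qed

lemma z_closed_eq_f_closed_add_iff:
  assumes "n \<ge> 1"
  shows "z_closed n = f_closed n + n \<longleftrightarrow> n \<ge> 2 \<and> \<not> jumps_at n \<and> jumps_at (Suc n)"
proof (cases "z_special n")
  case True
  then show ?thesis
  proof (cases rule: z_special_cases)
    case 1
    then show ?thesis using assms f_closed_1 by (simp add: z_closed_def)
  next
    case (2 j)
    then show ?thesis
      using z_closed_fib_odd f_closed_fib_odd jumps_at_fib_odd fib_odd_ge_2[of j] by simp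
  next
    case (3 j)
    have "z_closed n < n"
      using 3 z_closed_fib_odd_minus_1[of j] fib_even_less_fib_odd[of "Suc j"] fib_even_ge_1[of "Suc j"]
      by simp
    then show ?thesis using 3 jumps_at_fib_odd_minus_1 by auto
  qed
next
  case False
  then have n: "n \<ge> 2" and z: "z_closed n = f_closed (Suc n) - 1"
    using z_closed_generic[OF False] by (auto simp: z_special_def f_shifted_def)
  show ?thesis
  proof (cases "jumps_at (Suc n)")
    case True
    then have "z_closed n = phi_quot n + n + 1"
      using z by (simp add: f_closed_def jumps_at_def)
    then show ?thesis using True n by (simp add: f_closed_def)
  next
    case False
    then have "z_closed n = phi_quot n"
      using z phi_quot_no_jump[of "Suc n"] by (simp add: f_closed_def)
    then show ?thesis using False phi_quot_less_self[of n] n by simp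
  qed
qed

theorem mainTheorem9:
  fixes n :: nat
  shows "z n = f n + n \<longleftrightarrow>
           (n = 0 \<or> (\<exists>k::int. k \<ge> 1 \<and> int n = \<lfloor>of_int k * phi ^ 2\<rfloor> + 1))"
proof (cases "n = 0")
  case True
  then show ?thesis by (simp add: z_eq_z_closed f_eq_f_closed z_closed_def f_closed_def)
next
  case False
  then have "z n = f n + n \<longleftrightarrow> n \<ge> 2 \<and> \<not> jumps_at n \<and> jumps_at (Suc n)"
    using z_closed_eq_f_closed_add_iff by (simp add: z_eq_z_closed f_eq_f_closed)
  also have "\<dots> \<longleftrightarrow> (\<exists>k::int. k \<ge> 1 \<and> int n = \<lfloor>of_int k * phi ^ 2\<rfloor> + 1)"
    using flat_before_jump_imp_beatty beatty_imp_flat_before_jump by blast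
  finally show ?thesis using False by simp
qed

end
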